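(* Let $\mathscr H$ be a complex Hilbert space and let $\mathbf{T}=(T_1,\dots,T_d)\in\mathbb{B}(\mathscr H)^d$ be a normal $d$-tuple. Then $$\|\mathbf{T}^2\|=\|(T_1^*T_1,T_2^*T_2,\dots,T_d^*T_d)\|\le\|\mathbf{T}\|^2=\|\mathbf{T}^*\|^2\le\sqrt{d}\,\|\mathbf{T}^2\|.$$
   Context: $\mathbb{B}(\mathscr H)$ denotes the bounded linear operators on $\mathscr H$. A $d$-tuple $\mathbf{T}=(T_1,\dots,T_d)$ is normal if $T_iT_j=T_jT_i$ for all $i,j$ and each $T_i$ is a normal operator. The joint operator norm is $\|\mathbf{T}\|=\sup\{(\sum_{k=1}^d\|T_kx\|^2)^{1/2}: x\in\mathscr H,\|x\|=1\}$. Operations are componentwise: $\mathbf{T}^2=(T_1^2,\dots,T_d^2)$, $\mathbf{T}^*=(T_1^*,\dots,T_d^* )$. *)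

theory Defs
  imports "HOL-Analysis.Analysis"
begin

class chilbert = real_normed_vector + complete_space +
  fixes scaleC :: "complex \<Rightarrow> 'a \<Rightarrow> 'a"
    and cinner :: "'a \<Rightarrow> 'a \<Rightarrow> complex"
  assumes scaleC_of_real: "scaleC (of_real r) x = scaleR r x"
    and scaleC_add_right: "scaleC c (x + y) = scaleC c x + scaleC c y"
    and scaleC_add_left: "scaleC (b + c) x = scaleC b x + scaleC c x"
    and scaleC_scaleC: "scaleC b (scaleC c x) = scaleC (b * c) x"
    and scaleC_one: "scaleC 1 x = x"
    and cinner_add_left: "cinner (x + y) z = cinner x z + cinner y z"
    and cinner_scaleC_left: "cinner (scaleC c x) y = cnj c * cinner x y"
    and cinner_commute: "cinner x y = cnj (cinner y x)"
    and norm_cinner: "norm x = sqrt (Re (cinner x x))"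

definition bounded_clinear :: "('a::chilbert \<Rightarrow> 'a) \<Rightarrow> bool" where
  "bounded_clinear T \<longleftrightarrow> bounded_linear T \<and> (\<forall>c x. T (scaleC c x) = scaleC c (T x))"

definition cadjoint :: "('a::chilbert \<Rightarrow> 'a) \<Rightarrow> ('a \<Rightarrow> 'a)" where
  "cadjoint T = (SOME S. bounded_clinear S \<and> (\<forall>x y. cinner (T x) y = cinner x (S y)))"

definition normal_op :: "('a::chilbert \<Rightarrow> 'a) \<Rightarrow> bool" where
  "normal_op T \<longleftrightarrow> bounded_clinear T \<and> cadjoint T \<circ> T = T \<circ> cadjoint T"

definition normal_tuple :: "nat \<Rightarrow> (nat \<Rightarrow> 'a::chilbert \<Rightarrow> 'a) \<Rightarrow> bool" where
  "normal_tuple d T \<longleftrightarrow> (\<forall>i<d. normal_op (T i)) \<and> (\<forall>i<d. \<forall>j<d. T i \<circ> T j = T j \<circ> T i)"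

text \<open>Joint operator norm (supremum over the closed unit ball; agrees with the
supremum over the unit sphere on nonzero spaces and is 0 on the zero space).\<close>
definition joint_norm :: "nat \<Rightarrow> (nat \<Rightarrow> 'a::chilbert \<Rightarrow> 'a) \<Rightarrow> real" where
  "joint_norm d T = (SUP x\<in>{x. norm x \<le> 1}. sqrt (\<Sum>k<d. (norm (T k x))\<^sup>2))"

end

theory Submission
  imports Defs
begin

text \<open>Normality gives \<open>\<parallel>T\<^sub>k x\<parallel> = \<parallel>T\<^sub>k\<^sup>* x\<parallel>\<close>; applied to \<open>x\<close> and to \<open>T\<^sub>k x\<close> this yields
both equalities. The bound \<open>\<parallel>T\<^sup>2\<parallel> \<le> \<parallel>T\<parallel>\<^sup>2\<close> comes from
\<open>\<parallel>T\<^sub>k T\<^sub>k x\<parallel>\<^sup>2 \<le> \<Sum>\<^sub>j \<parallel>T\<^sub>j T\<^sub>k x\<parallel>\<^sup>2 \<le> \<parallel>T\<parallel>\<^sup>2 \<parallel>T\<^sub>k x\<parallel>\<^sup>2\<close>. For the last inequality,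
\<open>\<parallel>T\<^sub>k x\<parallel>\<^sup>2 = \<langle>x, T\<^sub>k\<^sup>*T\<^sub>k x\<rangle> \<le> \<parallel>T\<^sub>k\<^sup>*T\<^sub>k x\<parallel>\<close> on the unit ball, and Cauchy-Schwarz in
\<open>\<real>\<^sup>d\<close> bounds \<open>\<Sum>\<^sub>k \<parallel>T\<^sub>k\<^sup>*T\<^sub>k x\<parallel>\<close> by \<open>\<surd>d\<close> times the joint norm of \<open>(T\<^sub>k\<^sup>*T\<^sub>k)\<^sub>k\<close>.
The adjoint exists by the Riesz representation theorem: a functional \<open>f \<noteq> 0\<close> is
represented by a multiple of the element of minimal norm in the hyperplane \<open>f = 1\<close>.\<close>

lemma cinner_add_right: "cinner x (y + z) = cinner x y + cinner (x::'a::chilbert) z"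
  by (metis cinner_add_left cinner_commute complex_cnj_add)

lemma cinner_scaleC_right: "cinner x (scaleC c y) = c * cinner (x::'a::chilbert) y"
  by (metis cinner_commute cinner_scaleC_left complex_cnj_cnj complex_cnj_mult)

lemma cinner_zero_left[simp]: "cinner (0::'a::chilbert) y = 0"
  using cinner_add_left[of "0::'a" 0 y] by simp

lemma cinner_zero_right[simp]: "cinner (x::'a::chilbert) 0 = 0"
  by (metis cinner_commute cinner_zero_left complex_cnj_zero)

lemma cinner_minus_left: "cinner (- x) y = - cinner (x::'a::chilbert) y"
  using cinner_add_left[of x "-x" y] by (simp add: add.commute eq_neg_iff_add_eq_0)

lemma cinner_minus_right: "cinner x (- y) = - cinner (x::'a::chilbert) y"
  by (metis cinner_commute cinner_minus_left complex_cnj_minus)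

lemma cinner_diff_left: "cinner (x - y) z = cinner x z - cinner (y::'a::chilbert) z"
  unfolding diff_conv_add_uminus by (simp only: cinner_add_left cinner_minus_left)

lemma cinner_diff_right: "cinner x (y - z) = cinner x y - cinner (x::'a::chilbert) z"
  unfolding diff_conv_add_uminus by (simp only: cinner_add_right cinner_minus_right)

lemma cinner_self: "cinner (x::'a::chilbert) x = complex_of_real ((norm x)^2)"
proof -
  have im: "Im (cinner x x) = 0"
    using cinner_commute[of x x] by (simp add: complex_eq_iff)
  have "sqrt (Re (cinner x x)) \<ge> 0" using norm_cinner[of x] by (metis norm_ge_zero)
  then have re: "Re (cinner x x) \<ge> 0" by simp
  have "(norm x)^2 = Re (cinner x x)" using norm_cinner[of x] re by simp
  then show ?thesis using im by (simp add: complex_eq_iff)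
qed

lemma Re_cinner_self: "Re (cinner (x::'a::chilbert) x) = (norm x)^2"
  by (simp add: cinner_self)

lemma cinner_ext: "(\<And>x. cinner x a = cinner x b) \<Longrightarrow> a = (b::'a::chilbert)"
proof -
  assume h: "\<And>x. cinner x a = cinner x b"
  have "cinner (a - b) (a - b) = 0" by (simp add: cinner_diff_right h)
  then have "norm (a - b) = 0" by (simp add: cinner_self)
  then show ?thesis by simp
qed

lemma norm_scaleC: "norm (scaleC c x) = norm c * norm (x::'a::chilbert)"
proof -
  have "(norm (scaleC c x))^2 = Re (cinner (scaleC c x) (scaleC c x))" by (simp add: Re_cinner_self)
  also have "\<dots> = Re ((c * cnj c) * complex_of_real ((norm x)^2))"
    by (simp only: cinner_scaleC_left cinner_scaleC_right cinner_self[of x] mult_ac)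
  also have "\<dots> = Re (complex_of_real ((norm c)^2) * complex_of_real ((norm x)^2))"
    by (simp only: complex_norm_square)
  also have "\<dots> = (norm c)^2 * (norm x)^2" by simp
  finally have "(norm (scaleC c x))^2 = (norm c * norm x)^2" by (simp add: power_mult_distrib)
  then show ?thesis by simp
qed

lemma norm_add_sq: "(norm (a + b))^2 = (norm a)^2 + (norm b)^2 + 2 * Re (cinner a (b::'a::chilbert))"
proof -
  have "(norm (a+b))^2 = Re (cinner (a+b) (a+b))" by (simp add: Re_cinner_self)
  also have "\<dots> = Re (cinner a a) + Re (cinner b b) + Re (cinner a b) + Re (cinner b a)"
    by (simp add: cinner_add_left cinner_add_right)
  also have "Re (cinner b a) = Re (cinner a b)" using cinner_commute[of b a] by simp
  finally show ?thesis by (simp add: Re_cinner_self)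
qed

lemma norm_diff_sq: "(norm (a - b))^2 = (norm a)^2 + (norm b)^2 - 2 * Re (cinner a (b::'a::chilbert))"
proof -
  have "(norm (a - b))^2 = (norm (a + -b))^2" by (metis diff_conv_add_uminus)
  also have "\<dots> = (norm a)^2 + (norm (-b))^2 + 2*Re(cinner a (-b))" by (rule norm_add_sq)
  also have "cinner a (-b) = - cinner a b" by (rule cinner_minus_right)
  also have "norm (-b) = norm b" by (rule norm_minus_cancel)
  finally show ?thesis by simp
qed

lemma Cauchy_Schwarz_cinner: "norm (cinner x y) \<le> norm x * norm (y::'a::chilbert)"
proof (cases "y = 0")
  case True then show ?thesis by simp
next
  case False
  define n where "n = (norm y)^2"
  have n: "n > 0" using False by (simp add: n_def)
  define t where "t = cinner y x / complex_of_real n"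
  define w where "w = x - scaleC t y"
  have yy: "cinner y y = complex_of_real n" by (simp add: cinner_self n_def)
  have wy: "cinner w y = 0"
    unfolding w_def using n
    by (simp add: cinner_diff_left cinner_scaleC_left yy t_def)
       (metis cinner_commute)
  have "cinner w w = cinner w x - t * cinner w y"
    by (subst (2) w_def) (simp add: cinner_diff_right cinner_scaleC_right)
  also have "\<dots> = cinner w x" by (simp add: wy)
  also have "\<dots> = cinner x x - cnj t * cinner y x" by (simp add: w_def cinner_diff_left cinner_scaleC_left)
  finally have "Re (cinner w w) = (norm x)^2 - Re (cnj t * cinner y x)"
    by (simp add: Re_cinner_self)
  moreover have "cnj t * cinner y x = complex_of_real ((norm (cinner y x))^2 / n)"
  proof -
    have "cnj t * cinner y x = (cinner y x * cnj (cinner y x)) / complex_of_real n"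
      by (simp add: t_def)
    also have "\<dots> = complex_of_real ((norm (cinner y x))^2) / complex_of_real n"
      by (simp only: complex_norm_square)
    finally show ?thesis by simp
  qed
  moreover have "Re (cinner w w) \<ge> 0" by (simp add: Re_cinner_self)
  ultimately have "(norm (cinner y x))^2 / n \<le> (norm x)^2" by simp
  then have "(norm (cinner y x))^2 \<le> (norm x)^2 * n" using n by (simp add: pos_divide_le_eq)
  then have "(norm (cinner y x))^2 \<le> (norm x)^2 * (norm y)^2" unfolding n_def .
  then have "(norm (cinner y x))^2 \<le> (norm x * norm y)^2" by (simp add: power_mult_distrib)
  then have "norm (cinner y x) \<le> norm x * norm y" by (rule power2_le_imp_le) simp
  moreover have "norm (cinner x y) = norm (cinner y x)" by (metis cinner_commute complex_mod_cnj)
  ultimately show ?thesis by linarith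
qed

lemma bounded_linear_cinner_right: "bounded_linear (cinner (x::'a::chilbert))"
proof (rule bounded_linear_intro[where K="norm x"])
  show "cinner x (y + z) = cinner x y + cinner x z" for y z
    by (rule cinner_add_right)
  show "cinner x (scaleR r y) = scaleR r (cinner x y)" for r y
    by (simp add: scaleC_of_real[symmetric] cinner_scaleC_right scaleR_conv_of_real)
  show "norm (cinner x y) \<le> norm y * norm x" for y
    using Cauchy_Schwarz_cinner[of x y] by (simp add: mult.commute)
qed

lemma norm_diff_sq_le_midpoint_closed:
  fixes M :: "'a::chilbert set"
  assumes mid: "\<And>a b. a \<in> M \<Longrightarrow> b \<in> M \<Longrightarrow> scaleR (1/2) (a + b) \<in> M"
    and lower: "\<And>z. z \<in> M \<Longrightarrow> D \<le> (norm z)^2"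
    and "a \<in> M" "b \<in> M"
  shows "(norm (a - b))^2 \<le> 2 * ((norm a)^2 - D) + 2 * ((norm b)^2 - D)"
proof -
  have "D \<le> (norm (scaleR (1/2) (a + b)))^2" by (rule lower[OF mid[OF assms(3,4)]])
  also have "\<dots> = (norm (a + b))^2 / 4" by (simp add: power2_eq_square)
  finally have "4 * D \<le> (norm (a + b))^2" by simp
  moreover have "(norm (a + b))^2 + (norm (a - b))^2 = 2 * (norm a)^2 + 2 * (norm b)^2"
    by (simp add: norm_add_sq norm_diff_sq)
  ultimately show ?thesis unfolding right_diff_distrib by linarith
qed

lemma closed_midpoint_closed_has_min_norm:
  fixes M :: "'a::chilbert set"
  assumes "closed M" "M \<noteq> {}"
    and mid: "\<And>a b. a \<in> M \<Longrightarrow> b \<in> M \<Longrightarrow> scaleR (1/2) (a + b) \<in> M"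
  obtains u where "u \<in> M" "\<And>z. z \<in> M \<Longrightarrow> norm u \<le> norm z"
proof -
  define D where "D = (INF z\<in>M. (norm z)^2)"
  have bdd: "bdd_below ((\<lambda>z. (norm z)^2) ` M)" by (rule bdd_belowI[where m=0]) auto
  have lower: "D \<le> (norm z)^2" if "z \<in> M" for z
    unfolding D_def by (rule cINF_lower[OF bdd that])
  have "\<exists>y. y \<in> M \<and> (norm y)^2 < D + inverse (real (Suc n))" for n
    using cINF_less_iff[OF assms(2) bdd, of "D + inverse (real (Suc n))"] by (auto simp: D_def)
  then obtain y where y: "\<And>n. y n \<in> M" "\<And>n. (norm (y n))^2 < D + inverse (real (Suc n))"
    by metis
  have "Cauchy y"
  proof (rule CauchyI)
    fix e :: real assume e: "0 < e"
    obtain N where N: "inverse (real (Suc N)) < e^2 / 4"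
      using reals_Archimedean[of "e^2 / 4"] e by auto
    have "norm (y m - y n) < e" if "N \<le> m" "N \<le> n" for m n
    proof -
      have "inverse (real (Suc m)) \<le> inverse (real (Suc N))"
        "inverse (real (Suc n)) \<le> inverse (real (Suc N))"
        using that by (simp_all add: le_imp_inverse_le)
      moreover have "(norm (y m - y n))^2 \<le> 2 * ((norm (y m))^2 - D) + 2 * ((norm (y n))^2 - D)"
        using norm_diff_sq_le_midpoint_closed mid lower y(1) by blast
      ultimately have "(norm (y m - y n))^2 < e^2"
        using y(2)[of m] y(2)[of n] N unfolding right_diff_distrib by linarith
      then show ?thesis using e by (simp add: power_less_imp_less_base)
    qed
    then show "\<exists>N. \<forall>m\<ge>N. \<forall>n\<ge>N. norm (y m - y n) < e" by blast
  qed
  then obtain u where u: "y \<longlonglongrightarrow> u" using Cauchy_convergent convergent_def by blast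
  have "(\<lambda>n. (norm (y n))^2) \<longlonglongrightarrow> (norm u)^2" using u by (intro tendsto_intros)
  then have "(norm u)^2 \<le> D"
    by (rule LIMSEQ_le[OF _ LIMSEQ_inverse_real_of_nat_add]) (use y(2) less_imp_le in blast)
  then have "(norm u)^2 \<le> (norm z)^2" if "z \<in> M" for z
    using lower[OF that] by linarith
  then have "norm u \<le> norm z" if "z \<in> M" for z
    using that power2_le_imp_le norm_ge_zero by blast
  then show thesis using that closed_sequentially[OF assms(1) y(1) u] by blast
qed

text \<open>Minimality tested at \<open>t = -\<langle>w, u\<rangle> / \<parallel>w\<parallel>\<^sup>2\<close> gives \<open>|\<langle>u, w\<rangle>|\<^sup>2 / \<parallel>w\<parallel>\<^sup>2 \<le> 0\<close>.\<close>

lemma cinner_eq_0_if_norm_minimal_on_line: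
  fixes u w :: "'a::chilbert"
  assumes min: "\<And>t. norm u \<le> norm (u + scaleC t w)"
  shows "cinner u w = 0"
proof (cases "w = 0")
  case True then show ?thesis by simp
next
  case False
  define a where "a = cinner u w"
  define nw where "nw = (norm w)^2"
  have nw: "nw > 0" using False by (simp add: nw_def)
  define t where "t = - cnj a / complex_of_real nw"
  have "(norm u)^2 \<le> (norm (u + scaleC t w))^2" using min[of t] by (simp add: power_mono)
  also have "\<dots> = (norm u)^2 + (norm t * norm w)^2 + 2 * Re (t * a)"
    by (simp add: norm_add_sq norm_scaleC cinner_scaleC_right a_def)
  also have "(norm t * norm w)^2 = (norm a)^2 / nw"
  proof -
    have "norm t = norm a / nw" using nw by (simp add: t_def norm_divide)
    then show ?thesis using nw by (simp add: power_mult_distrib power_divide nw_def power2_eq_square)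
  qed
  also have "t * a = - complex_of_real ((norm a)^2 / nw)"
    by (simp add: t_def mult.commute) (metis complex_norm_square of_real_power)
  finally have "(norm a)^2 / nw \<le> 0" by simp
  then show ?thesis using nw by (simp add: a_def divide_le_0_iff)
qed

lemma riesz_representation:
  fixes f :: "'a::chilbert \<Rightarrow> complex"
  assumes bl: "bounded_linear f" and sc: "\<And>c x. f (scaleC c x) = c * f x"
  obtains v where "\<And>x. f x = cinner v x"
proof (cases "\<forall>x. f x = 0")
  case True then show thesis using that[of 0] by simp
next
  case False
  then obtain x0 where x0: "f x0 \<noteq> 0" by blast
  define M where "M = {y. f y = 1}"
  have closed: "closed M"
    unfolding M_def by (intro closed_Collect_eq linear_continuous_on[OF bl] continuous_on_const)
  have nonempty: "M \<noteq> {}"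
    using x0 by (auto simp: M_def sc intro!: exI[of _ "scaleC (1 / f x0) x0"])
  have mid: "scaleR (1/2) (a + b) \<in> M" if "a \<in> M" "b \<in> M" for a b
    using that by (simp add: M_def linear_simps[OF bl] scaleR_conv_of_real)
  obtain u where u: "u \<in> M" "\<And>z. z \<in> M \<Longrightarrow> norm u \<le> norm z"
    using closed_midpoint_closed_has_min_norm[OF closed nonempty mid] by blast
  have fu: "f u = 1" using u(1) by (simp add: M_def)
  have orth: "cinner u w = 0" if "f w = 0" for w
    by (rule cinner_eq_0_if_norm_minimal_on_line, rule u(2))
       (simp add: M_def linear_simps(1)[OF bl] sc fu that)
  define nu where "nu = (norm u)^2"
  have nu: "nu > 0" using fu linear_simps(3)[OF bl] by (auto simp: nu_def)
  have "f x = cinner (scaleC (complex_of_real (1 / nu)) u) x" for x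
  proof -
    have "f (x - scaleC (f x) u) = 0" by (simp add: linear_simps(2)[OF bl] sc fu)
    then have "cinner u x = f x * complex_of_real nu"
      using orth by (force simp: cinner_diff_right cinner_scaleC_right cinner_self nu_def)
    then show ?thesis using nu by (simp add: cinner_scaleC_left)
  qed
  then show thesis by (rule that)
qed

lemma adjoint_exists:
  assumes "bounded_clinear (T :: 'a::chilbert \<Rightarrow> 'a)"
  shows "\<exists>S. bounded_clinear S \<and> (\<forall>x y. cinner (T x) y = cinner x (S y))"
proof -
  have bl: "bounded_linear T" and cl: "\<And>c x. T (scaleC c x) = scaleC c (T x)"
    using assms by (auto simp: bounded_clinear_def)
  obtain K where K: "\<And>x. norm (T x) \<le> norm x * K" "K > 0"
    using bounded_linear.pos_bounded[OF bl] by blast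
  have "\<exists>v. \<forall>x. cinner y (T x) = cinner v x" for y
    using riesz_representation[OF bounded_linear_compose[OF bounded_linear_cinner_right bl]]
    by (metis cl cinner_scaleC_right)
  then obtain S where S: "\<And>y x. cinner y (T x) = cinner (S y) x" by metis
  have adj: "cinner (T x) y = cinner x (S y)" for x y
    by (metis S cinner_commute)
  have Sadd: "S (a + b) = S a + S b" for a b
    by (rule cinner_ext) (simp add: adj[symmetric] cinner_add_right)
  have SscC: "S (scaleC c a) = scaleC c (S a)" for c a
    by (rule cinner_ext) (simp add: adj[symmetric] cinner_scaleC_right)
  have Sbd: "norm (S y) \<le> norm y * K" for y
  proof -
    have "(norm (S y))^2 = Re (cinner (T (S y)) y)" by (simp add: adj Re_cinner_self)
    also have "\<dots> \<le> norm (T (S y)) * norm y"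
      using complex_Re_le_cmod Cauchy_Schwarz_cinner order_trans by blast
    also have "\<dots> \<le> (norm (S y) * K) * norm y" by (rule mult_right_mono[OF K(1)]) simp
    finally have "norm (S y) * norm (S y) \<le> norm (S y) * (norm y * K)"
      by (simp add: power2_eq_square mult_ac)
    then show ?thesis
      using K by (cases "norm (S y) = 0") (simp_all add: mult_le_cancel_left_pos)
  qed
  have "bounded_linear S"
    by (rule bounded_linear_intro[where K=K])
       (auto simp: Sadd Sbd SscC scaleC_of_real[symmetric])
  then show ?thesis using adj SscC by (auto simp: bounded_clinear_def)
qed

lemma
  assumes "bounded_clinear (T :: 'a::chilbert \<Rightarrow> 'a)"
  shows bounded_clinear_cadjoint: "bounded_clinear (cadjoint T)"
    and cinner_cadjoint: "cinner (T x) y = cinner x (cadjoint T y)"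
  using someI_ex[OF adjoint_exists[OF assms]] unfolding cadjoint_def[symmetric] by auto

lemma normal_op_norm_cadjoint:
  assumes "normal_op (T :: 'a::chilbert \<Rightarrow> 'a)"
  shows "norm (cadjoint T x) = norm (T x)"
proof -
  have bc: "bounded_clinear T" and "cadjoint T \<circ> T = T \<circ> cadjoint T"
    using assms by (auto simp: normal_op_def)
  then have comm: "cadjoint T (T x) = T (cadjoint T x)" by (metis comp_apply)
  note adj = cinner_cadjoint[OF bc]
  have "(norm (T x))^2 = Re (cinner x (T (cadjoint T x)))" by (simp add: Re_cinner_self[symmetric] adj comm)
  also have "\<dots> = Re (cinner (T (cadjoint T x)) x)" using cinner_commute[of x] by simp
  also have "\<dots> = (norm (cadjoint T x))^2" by (simp add: adj Re_cinner_self)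
  finally show ?thesis by simp
qed

lemma norm_sq_le_norm_cadjoint_comp:
  assumes "bounded_clinear (T :: 'a::chilbert \<Rightarrow> 'a)"
  shows "(norm (T x))^2 \<le> norm x * norm (cadjoint T (T x))"
proof -
  have "(norm (T x))^2 = Re (cinner x (cadjoint T (T x)))"
    by (simp add: Re_cinner_self[symmetric] cinner_cadjoint[OF assms])
  also have "\<dots> \<le> norm x * norm (cadjoint T (T x))"
    using complex_Re_le_cmod Cauchy_Schwarz_cinner order_trans by blast
  finally show ?thesis .
qed

lemma joint_norm_least:
  assumes "\<And>x. norm (x::'a::chilbert) \<le> 1 \<Longrightarrow> sqrt (\<Sum>k<d. (norm (F k x))^2) \<le> B"
  shows "joint_norm d F \<le> B"
  unfolding joint_norm_def
  by (rule cSUP_least) (use assms in \<open>auto intro: exI[of _ 0]\<close>)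

lemma bdd_above_joint_norm:
  assumes "\<And>k. k < d \<Longrightarrow> bounded_linear (F k :: 'a::chilbert \<Rightarrow> 'a)"
  shows "bdd_above ((\<lambda>x. sqrt (\<Sum>k<d. (norm (F k x))^2)) ` {x. norm x \<le> 1})"
proof -
  have "\<forall>k. \<exists>K. k < d \<longrightarrow> (\<forall>x. norm (F k x) \<le> norm x * K) \<and> K > 0"
    using assms bounded_linear.pos_bounded by blast
  then obtain K where K: "\<And>k x. k < d \<Longrightarrow> norm (F k x) \<le> norm x * K k" "\<And>k. k < d \<Longrightarrow> K k > 0"
    by metis
  have "(norm (F k x))^2 \<le> (K k)^2" if "k < d" "norm x \<le> 1" for k x
  proof -
    have "norm (F k x) \<le> norm x * K k" by (rule K(1)[OF that(1)])
    also have "\<dots> \<le> K k" using K(2)[OF that(1)] that(2) by (simp add: mult_left_le_one_le)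
    finally show ?thesis by (intro power_mono) auto
  qed
  then show ?thesis
    by (intro bdd_aboveI2[where M="sqrt (\<Sum>k<d. (K k)^2)"]) (auto intro!: sum_mono)
qed

lemma joint_norm_upper:
  assumes "\<And>k. k < d \<Longrightarrow> bounded_linear (F k :: 'a::chilbert \<Rightarrow> 'a)" "norm x \<le> 1"
  shows "sqrt (\<Sum>k<d. (norm (F k x))^2) \<le> joint_norm d F"
  unfolding joint_norm_def
  by (rule cSUP_upper) (use assms(2) bdd_above_joint_norm[OF assms(1)] in auto)

lemma joint_norm_nonneg:
  assumes "\<And>k. k < d \<Longrightarrow> bounded_linear (F k :: 'a::chilbert \<Rightarrow> 'a)"
  shows "0 \<le> joint_norm d F"
proof -
  have "0 \<le> sqrt (\<Sum>k<d. (norm (F k 0))^2)" by (simp add: sum_nonneg)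
  also have "\<dots> \<le> joint_norm d F" using joint_norm_upper[where F=F and x=0] assms by simp
  finally show ?thesis .
qed

lemma sum_norm_sq_le_joint_norm:
  assumes bl: "\<And>k. k < d \<Longrightarrow> bounded_linear (F k :: 'a::chilbert \<Rightarrow> 'a)"
  shows "(\<Sum>k<d. (norm (F k y))^2) \<le> (joint_norm d F)^2 * (norm y)^2"
proof (cases "y = 0")
  case True
  have "(\<Sum>k<d. (norm (F k y))^2) = 0"
    by (rule sum.neutral) (use bl True linear_simps(3) in auto)
  then show ?thesis by simp
next
  case False
  define x where "x = scaleR (1 / norm y) y"
  have Fx: "(norm (F k x))^2 = (norm (F k y))^2 / (norm y)^2" if "k < d" for k
    using linear_simps(5)[OF bl[OF that]] by (simp add: x_def power_divide)
  have "sqrt (\<Sum>k<d. (norm (F k x))^2) \<le> joint_norm d F"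
    using joint_norm_upper[of d F x] bl by (simp add: x_def)
  then have "sqrt ((\<Sum>k<d. (norm (F k y))^2) / (norm y)^2) \<le> joint_norm d F"
    by (simp add: Fx sum_divide_distrib)
  then have "(sqrt ((\<Sum>k<d. (norm (F k y))^2) / (norm y)^2))^2 \<le> (joint_norm d F)^2"
    by (rule power_mono) (simp_all add: sum_nonneg)
  then have "(\<Sum>k<d. (norm (F k y))^2) / (norm y)^2 \<le> (joint_norm d F)^2"
    by (simp add: sum_nonneg)
  then show ?thesis using False by (simp add: pos_divide_le_eq)
qed

lemma joint_norm_cong:
  assumes "\<And>k x. k < d \<Longrightarrow> norm (F k x) = norm (G k x)"
  shows "joint_norm d F = joint_norm d (G :: nat \<Rightarrow> 'a::chilbert \<Rightarrow> 'a)"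
proof -
  have "(\<Sum>k<d. (norm (F k x))^2) = (\<Sum>k<d. (norm (G k x))^2)" for x
    by (rule sum.cong) (simp_all add: assms)
  then show ?thesis unfolding joint_norm_def by simp
qed

lemma joint_norm_comp_le:
  assumes bS: "\<And>k. k < d \<Longrightarrow> bounded_linear (S k :: 'a::chilbert \<Rightarrow> 'a)"
    and bT: "\<And>k. k < d \<Longrightarrow> bounded_linear (T k :: 'a \<Rightarrow> 'a)"
  shows "joint_norm d (\<lambda>k. S k \<circ> T k) \<le> joint_norm d S * joint_norm d T"
proof (rule joint_norm_least)
  fix x :: 'a assume x: "norm x \<le> 1"
  let ?JS = "joint_norm d S" and ?JT = "joint_norm d T"
  have "(\<Sum>k<d. (norm ((S k \<circ> T k) x))^2) \<le> (\<Sum>k<d. \<Sum>j<d. (norm (S j (T k x)))^2)"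
  proof (rule sum_mono)
    fix k assume "k \<in> {..<d}"
    then show "(norm ((S k \<circ> T k) x))^2 \<le> (\<Sum>j<d. (norm (S j (T k x)))^2)"
      using member_le_sum[of k "{..<d}" "\<lambda>j. (norm (S j (T k x)))^2"] by simp
  qed
  also have "\<dots> \<le> (\<Sum>k<d. ?JS^2 * (norm (T k x))^2)"
    by (intro sum_mono sum_norm_sq_le_joint_norm bS)
  also have "\<dots> = ?JS^2 * (\<Sum>k<d. (norm (T k x))^2)" by (simp add: sum_distrib_left)
  also have "\<dots> \<le> ?JS^2 * (?JT^2 * (norm x)^2)"
    by (intro mult_left_mono sum_norm_sq_le_joint_norm bT zero_le_power2)
  also have "\<dots> \<le> ?JS^2 * (?JT^2 * 1)"
    using x by (intro mult_left_mono) (auto simp: power_le_one)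
  finally show "sqrt (\<Sum>k<d. (norm ((S k \<circ> T k) x))^2) \<le> ?JS * ?JT"
    by (intro real_le_lsqrt mult_nonneg_nonneg joint_norm_nonneg bS bT)
       (simp_all add: power_mult_distrib)
qed

lemma joint_norm_sq_le_sqrt_mult_cadjoint_comp:
  assumes bc: "\<And>k. k < d \<Longrightarrow> bounded_clinear (T k :: 'a::chilbert \<Rightarrow> 'a)"
  shows "(joint_norm d T)^2 \<le> sqrt (real d) * joint_norm d (\<lambda>k. cadjoint (T k) \<circ> T k)"
proof -
  let ?A = "\<lambda>k. cadjoint (T k) \<circ> T k"
  have bT: "bounded_linear (T k)" and bA: "bounded_linear (?A k)" if "k < d" for k
    using bc[OF that] bounded_clinear_cadjoint[OF bc[OF that]]
    by (auto simp: bounded_clinear_def o_def intro: bounded_linear_compose)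
  have "joint_norm d T \<le> sqrt (sqrt (real d) * joint_norm d ?A)"
  proof (rule joint_norm_least)
    fix x :: 'a assume x: "norm x \<le> 1"
    have "(\<Sum>k<d. (norm (T k x))^2) \<le> (\<Sum>k<d. \<bar>1\<bar> * \<bar>norm (?A k x)\<bar>)"
    proof (intro sum_mono)
      fix k assume "k \<in> {..<d}"
      then have "(norm (T k x))^2 \<le> norm x * norm (?A k x)"
        using norm_sq_le_norm_cadjoint_comp[OF bc] by simp
      also have "\<dots> \<le> norm (?A k x)" using x by (simp add: mult_left_le_one_le)
      finally show "(norm (T k x))^2 \<le> \<bar>1\<bar> * \<bar>norm (?A k x)\<bar>" by simp
    qed
    also have "\<dots> \<le> L2_set (\<lambda>_. 1) {..<d} * L2_set (\<lambda>k. norm (?A k x)) {..<d}"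
      by (rule L2_set_mult_ineq)
    also have "\<dots> \<le> sqrt (real d) * joint_norm d ?A"
      using joint_norm_upper[OF bA x] by (simp add: L2_set_def mult_left_mono)
    finally show "sqrt (\<Sum>k<d. (norm (T k x))^2) \<le> sqrt (sqrt (real d) * joint_norm d ?A)"
      by simp
  qed
  then have "(joint_norm d T)^2 \<le> (sqrt (sqrt (real d) * joint_norm d ?A))^2"
    by (rule power_mono) (rule joint_norm_nonneg[OF bT])
  also have "\<dots> = sqrt (real d) * joint_norm d ?A" using joint_norm_nonneg[OF bA] by simp
  finally show ?thesis .
qed

theorem theorem2p5:
  fixes T :: "nat \<Rightarrow> 'a::chilbert \<Rightarrow> 'a" and d :: nat
  assumes "normal_tuple d T"
  shows "joint_norm d (\<lambda>k. T k \<circ> T k) = joint_norm d (\<lambda>k. cadjoint (T k) \<circ> T k)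
    \<and> joint_norm d (\<lambda>k. cadjoint (T k) \<circ> T k) \<le> (joint_norm d T)\<^sup>2
    \<and> (joint_norm d T)\<^sup>2 = (joint_norm d (\<lambda>k. cadjoint (T k)))\<^sup>2
    \<and> (joint_norm d (\<lambda>k. cadjoint (T k)))\<^sup>2 \<le> sqrt (real d) * joint_norm d (\<lambda>k. T k \<circ> T k)"
proof -
  have normal: "normal_op (T k)" if "k < d" for k
    using assms that by (simp add: normal_tuple_def)
  then have bc: "bounded_clinear (T k)" if "k < d" for k
    using that by (simp add: normal_op_def)
  then have bl: "bounded_linear (T k)" if "k < d" for k
    using that by (simp add: bounded_clinear_def)
  have square_eq: "joint_norm d (\<lambda>k. T k \<circ> T k) = joint_norm d (\<lambda>k. cadjoint (T k) \<circ> T k)"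
    by (rule joint_norm_cong) (simp add: normal_op_norm_cadjoint normal)
  have adjoint_eq: "joint_norm d (\<lambda>k. cadjoint (T k)) = joint_norm d T"
    by (rule joint_norm_cong) (simp add: normal_op_norm_cadjoint normal)
  have "joint_norm d (\<lambda>k. T k \<circ> T k) \<le> (joint_norm d T)\<^sup>2"
    using joint_norm_comp_le[OF bl bl] by (simp add: power2_eq_square)
  then show ?thesis
    using square_eq adjoint_eq joint_norm_sq_le_sqrt_mult_cadjoint_comp[OF bc] by simp
qed

end
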